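(* Let $n$ be an even positive integer. Then $C_{1/6}(\mathrm{1v2Cycle})\ge\frac n4$, where $\mathrm{1v2Cycle}$ is on $n$ vertices.
   Context: Graphs on vertex set $\{1,\dots,n\}$ are encoded as $x\in\{0,1\}^N$, $N=\binom n2$, one bit per unordered pair indicating presence of the edge. $\mathrm{1v2Cycle}:\Delta\to\{0,1\}$ is defined on the set $\Delta$ of graphs that are either a single cycle of length $n$ (value $1$) or a disjoint union of two cycles each of length $n/2$ (value $0$). For a partial $g:\Delta\to\{0,1\}$, the canonical distribution $\mathcal{D}_g$ on $\Delta$ outputs with probability $1/2$ a uniform element of $g^{-1}(1)$ and with probability $1/2$ a uniform element of $g^{-1}(0)$. A certificate of $f:\Delta\to\{0,1\}$ on $x\in\Delta$ is a set $C\subseteq\{1,\dots,N\}$ such that every $y\in\Delta$ with $y|_C=x|_C$ has $f(y)=f(x)$; $C(f)=\max_{x\in\Delta}\min\{|C|:C\text{ certificate on }x\}$. The $\delta$-approximate certificate complexity is $C_\delta(g)=\min\{C(f): f:\Delta\to\{0,1\},\ \Pr_{x\sim\mathcal{D}_g}[f(x)\ne g(x)]\le\delta\}$. *)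

theory Defs
  imports Complex_Main
begin

text \<open>Graphs on vertex set {1..n} are identified with their edge sets; an edge is an
  unordered pair {i,j} with i \<noteq> j. The N = n choose 2 input bits are indexed by
  these unordered pairs (the set Pairs n).\<close>

definition Pairs :: "nat \<Rightarrow> nat set set" where
  "Pairs n = {{i, j} | i j. i \<in> {1..n} \<and> j \<in> {1..n} \<and> i \<noteq> j}"

definition cycle_edges :: "nat list \<Rightarrow> nat set set" where
  "cycle_edges vs = {{vs ! i, vs ! ((i + 1) mod length vs)} | i. i < length vs}"

definition one_cycle :: "nat \<Rightarrow> nat set set \<Rightarrow> bool" where
  "one_cycle n E \<longleftrightarrow> (\<exists>vs. distinct vs \<and> set vs = {1..n} \<and> length vs = n \<and> 3 \<le> length vs
      \<and> E = cycle_edges vs)"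

definition two_cycles :: "nat \<Rightarrow> nat set set \<Rightarrow> bool" where
  "two_cycles n E \<longleftrightarrow> (\<exists>vs ws. distinct (vs @ ws) \<and> set (vs @ ws) = {1..n}
      \<and> 2 * length vs = n \<and> 2 * length ws = n \<and> 3 \<le> length vs \<and> 3 \<le> length ws
      \<and> E = cycle_edges vs \<union> cycle_edges ws)"

definition Delta :: "nat \<Rightarrow> nat set set set" where
  "Delta n = {E. one_cycle n E \<or> two_cycles n E}"

definition oneVtwoCycle :: "nat \<Rightarrow> nat set set \<Rightarrow> bool" where
  "oneVtwoCycle n E = one_cycle n E"

definition is_certificate :: "nat \<Rightarrow> (nat set set \<Rightarrow> bool) \<Rightarrow> nat set set \<Rightarrow> nat set set \<Rightarrow> bool" where
  "is_certificate n f x C \<longleftrightarrow> C \<subseteq> Pairs n \<and>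
     (\<forall>y \<in> Delta n. (\<forall>e \<in> C. (e \<in> y \<longleftrightarrow> e \<in> x)) \<longrightarrow> f y = f x)"

definition cert_complexity :: "nat \<Rightarrow> (nat set set \<Rightarrow> bool) \<Rightarrow> nat" where
  "cert_complexity n f =
     Max ((\<lambda>x. Min (card ` {C. is_certificate n f x C})) ` Delta n)"

text \<open>Pr_{x ~ D_g}[f x \<noteq> g x] for the canonical distribution D_g on Delta n.\<close>
definition canon_err :: "nat \<Rightarrow> (nat set set \<Rightarrow> bool) \<Rightarrow> (nat set set \<Rightarrow> bool) \<Rightarrow> real" where
  "canon_err n g f =
     (1/2) * real (card {x \<in> Delta n. g x \<and> f x \<noteq> g x}) / real (card {x \<in> Delta n. g x})
   + (1/2) * real (card {x \<in> Delta n. \<not> g x \<and> f x \<noteq> g x}) / real (card {x \<in> Delta n. \<not> g x})"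

definition approx_cert_complexity :: "nat \<Rightarrow> real \<Rightarrow> (nat set set \<Rightarrow> bool) \<Rightarrow> nat" where
  "approx_cert_complexity n \<delta> g =
     Inf {cert_complexity n f | f. canon_err n g f \<le> \<delta>}"

end

(*
  Every input is the image of an ordering t of the vertices: the n-cycle through t, or the two
  n/2-cycles through its halves; all graphs have equally many preimages, so the canonical
  distribution is the image of the uniform distribution on orderings. Rotating t by i < n/2 and
  then cutting it into halves changes exactly four edges of the cycle through t, and each edge is
  changed for at most one i. So if f accepts the cycle through t, a certificate of size k there is
  consistent with at least n/2 - k of these two-cycle graphs, which f must accept too. Double counting
  over orderings shows that the error of f is at least 1/2 - k/n; error at most 1/6 thus forces
  k \<ge> n/3.
*)

theory Submission
  imports Defs
begin

section \<open>Vertex orderings and relabelling\<close>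

definition orderings :: "nat \<Rightarrow> nat list set" where
  "orderings n = {s. distinct s \<and> set s = {1..n} \<and> length s = n}"

definition relabel :: "(nat \<Rightarrow> nat) \<Rightarrow> nat set set \<Rightarrow> nat set set" where
  "relabel p E = (\<lambda>e. p ` e) ` E"

lemma finite_orderings: "finite (orderings n)"
proof -
  have "orderings n \<subseteq> {xs. set xs \<subseteq> {1..n} \<and> length xs = n}"
    unfolding orderings_def by auto
  then show ?thesis
    by (rule finite_subset) (simp add: finite_lists_length_eq)
qed

lemma upt_in_orderings: "[1..<Suc n] \<in> orderings n"
  unfolding orderings_def by auto

lemma card_orderings_pos: "0 < card (orderings n)"
  using finite_orderings upt_in_orderings by (auto simp: card_gt_0_iff)

lemma rotate_in_orderings: "s \<in> orderings n \<Longrightarrow> rotate i s \<in> orderings n"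
  unfolding orderings_def by simp

lemma inj_on_rotate_orderings: "inj_on (rotate i) (orderings n)"
  unfolding rotate_def by (rule inj_on_subset[OF inj_fn[OF inj_rotate1]]) simp

lemma cycle_edges_conv_image:
  "cycle_edges vs = (\<lambda>i. {vs ! i, vs ! (Suc i mod length vs)}) ` {..<length vs}"
  unfolding cycle_edges_def by auto

lemma cycle_edges_map: "cycle_edges (map p vs) = relabel p (cycle_edges vs)"
  unfolding cycle_edges_conv_image relabel_def image_image
proof (rule image_cong)
  fix i assume "i \<in> {..<length vs}"
  then have "Suc i mod length vs < length vs"
    by (intro mod_less_divisor) auto
  then show "{map p vs ! i, map p vs ! (Suc i mod length (map p vs))}
      = p ` {vs ! i, vs ! (Suc i mod length vs)}"
    using \<open>i \<in> {..<length vs}\<close> by simp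
qed simp

lemma ex_relabelling:
  assumes "s \<in> orderings n" "s' \<in> orderings n"
  obtains p where "map p s = s'" "bij_betw p {1..n} {1..n}"
proof
  let ?p = "\<lambda>v. the (map_of (zip s s') v)"
  show map: "map ?p s = s'"
    using assms by (intro nth_equalityI) (auto simp: orderings_def map_of_zip_nth)
  have "distinct (map ?p s)" "set (map ?p s) = {1..n}"
    using assms(2) by (simp_all only: map) (simp_all add: orderings_def)
  then show "bij_betw ?p {1..n} {1..n}"
    using assms(1) by (simp add: bij_betw_def distinct_map orderings_def)
qed

lemma map_in_orderings:
  assumes "bij_betw p {1..n} {1..n}" "t \<in> orderings n"
  shows "map p t \<in> orderings n"
  using assms by (auto simp: orderings_def bij_betw_def distinct_map)

lemma inj_on_map_orderings:
  assumes "inj_on p {1..n}"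
  shows "inj_on (map p) (orderings n)"
proof (rule inj_onI)
  fix t u assume "t \<in> orderings n" "u \<in> orderings n" "map p t = map p u"
  then show "t = u"
    using assms by (intro map_inj_on[of p t u]) (auto simp: orderings_def)
qed

lemma card_fibre_le:
  assumes F: "\<And>p t. F (map p t) = relabel p (F t)"
    and s: "s \<in> orderings n" and s': "s' \<in> orderings n"
  shows "card {t \<in> orderings n. F t = F s} \<le> card {t \<in> orderings n. F t = F s'}"
proof -
  obtain p where p: "map p s = s'" "bij_betw p {1..n} {1..n}"
    using ex_relabelling[OF s s'] .
  show ?thesis
  proof (rule card_inj_on_le)
    show "inj_on (map p) {t \<in> orderings n. F t = F s}"
      using inj_on_map_orderings p(2) by (auto simp: bij_betw_def intro: inj_on_subset)
    show "map p ` {t \<in> orderings n. F t = F s} \<subseteq> {t \<in> orderings n. F t = F s'}"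
    proof (rule image_subsetI)
      fix t assume "t \<in> {t \<in> orderings n. F t = F s}"
      then show "map p t \<in> {t \<in> orderings n. F t = F s'}"
        using F[of p t] F[of p s] p map_in_orderings by auto
    qed
  qed (simp add: finite_orderings)
qed

lemma card_orderings_filter:
  assumes F: "\<And>p t. F (map p t) = relabel p (F t)" and s0: "s0 \<in> orderings n"
  shows "card {t \<in> orderings n. Q (F t)}
    = card {E \<in> F ` orderings n. Q E} * card {t \<in> orderings n. F t = F s0}"
proof -
  let ?fibre = "\<lambda>E. {t \<in> orderings n. F t = E}"
  have fibre_card: "card (?fibre E) = card (?fibre (F s0))" if "E \<in> F ` orderings n" for E
    using that card_fibre_le[OF F] s0 by (auto intro: antisym)
  have "{t \<in> orderings n. Q (F t)} = (\<Union>E \<in> {E \<in> F ` orderings n. Q E}. ?fibre E)"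
    by auto
  then have "card {t \<in> orderings n. Q (F t)}
      = (\<Sum>E \<in> {E \<in> F ` orderings n. Q E}. card (?fibre E))"
    by (simp only:) (rule card_UN_disjoint, auto simp: finite_orderings)
  also have "\<dots> = card {E \<in> F ` orderings n. Q E} * card (?fibre (F s0))"
    by (simp add: fibre_card)
  finally show ?thesis .
qed

lemma uniform_image_fraction:
  assumes "\<And>p t. F (map p t) = relabel p (F t)"
  shows "real (card {E \<in> F ` orderings n. Q E}) / real (card (F ` orderings n))
       = real (card {t \<in> orderings n. Q (F t)}) / real (card (orderings n))"
proof -
  obtain s0 where s0: "s0 \<in> orderings n"
    using upt_in_orderings by blast
  let ?c = "card {t \<in> orderings n. F t = F s0}"
  have "?c \<noteq> 0"
    using s0 finite_orderings by (auto simp: card_eq_0_iff)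
  moreover have "card (orderings n) = card (F ` orderings n) * ?c"
    using card_orderings_filter[OF assms s0, of "\<lambda>_. True"] by simp
  ultimately show ?thesis
    using card_orderings_filter[OF assms s0, of Q] by simp
qed

section \<open>Cycles along an ordering\<close>

definition cyc_nth :: "'a list \<Rightarrow> nat \<Rightarrow> 'a" where
  "cyc_nth s a = s ! (a mod length s)"

definition pos_edge :: "nat list \<Rightarrow> nat \<Rightarrow> nat \<Rightarrow> nat set" where
  "pos_edge s a b = {cyc_nth s a, cyc_nth s b}"

definition path_edges :: "nat list \<Rightarrow> nat \<Rightarrow> nat \<Rightarrow> nat set set" where
  "path_edges s a l = (\<lambda>q. pos_edge s (a + q) (Suc (a + q))) ` {..<l}"

definition split_cycles :: "nat \<Rightarrow> nat list \<Rightarrow> nat set set" where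
  "split_cycles m s = cycle_edges (take m s) \<union> cycle_edges (drop m s)"

lemma split_cycles_map: "split_cycles m (map p t) = relabel p (split_cycles m t)"
  by (simp add: split_cycles_def take_map drop_map cycle_edges_map relabel_def image_Un)

lemma pos_edge_commute: "pos_edge s a b = pos_edge s b a"
  unfolding pos_edge_def by auto

lemma pos_edge_mod: "pos_edge s (a mod length s) (b mod length s) = pos_edge s a b"
  unfolding pos_edge_def cyc_nth_def by simp

lemma pos_edge_add_length: "pos_edge s (a + length s) (b + length s) = pos_edge s a b"
  unfolding pos_edge_def cyc_nth_def by simp

lemma path_edges_0 [simp]: "path_edges s a 0 = {}"
  unfolding path_edges_def by simp

lemma path_edges_Suc:
  "path_edges s a (Suc l) = path_edges s a l \<union> {pos_edge s (a + l) (Suc (a + l))}"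
  unfolding path_edges_def by (simp add: lessThan_Suc)

lemma path_edges_append:
  "path_edges s a (l + Suc l')
     = path_edges s a l \<union> {pos_edge s (a + l) (Suc (a + l))} \<union> path_edges s (Suc (a + l)) l'"
proof (induction l')
  case 0
  then show ?case by (simp add: path_edges_Suc)
next
  case (Suc l')
  then show ?case by (simp add: path_edges_Suc add.assoc)
qed

lemma cycle_edges_window:
  assumes "length xs = Suc l" "\<And>j. j \<le> l \<Longrightarrow> xs ! j = cyc_nth s (a + j)"
  shows "cycle_edges xs = path_edges s a l \<union> {pos_edge s a (a + l)}"
proof -
  have "{..<Suc l} = insert l {..<l}" by auto
  then have "cycle_edges xs = (\<lambda>j. {xs ! j, xs ! (Suc j mod Suc l)}) ` {..<l}
      \<union> {{xs ! l, xs ! 0}}"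
    unfolding cycle_edges_conv_image assms(1) by simp
  also have "(\<lambda>j. {xs ! j, xs ! (Suc j mod Suc l)}) ` {..<l} = path_edges s a l"
    unfolding path_edges_def pos_edge_def
  proof (rule image_cong)
    fix j assume "j \<in> {..<l}"
    then show "{xs ! j, xs ! (Suc j mod Suc l)} = {cyc_nth s (a + j), cyc_nth s (Suc (a + j))}"
      using assms(2)[of j] assms(2)[of "Suc j"] by simp
  qed simp
  also have "{xs ! l, xs ! 0} = pos_edge s a (a + l)"
    unfolding pos_edge_def using assms(2)[of 0] assms(2)[of l] by auto
  finally show ?thesis .
qed

lemma path_edges_shift: "path_edges s a (length s) = path_edges s 0 (length s)"
proof (cases s)
  case (Cons x xs)
  then obtain l where l: "length s = Suc l"
    by simp
  have "path_edges s (Suc a) (length s) = path_edges s a (length s)" for a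
  proof -
    have "pos_edge s (Suc a + l) (Suc (Suc a + l)) = pos_edge s a (Suc a)"
      using pos_edge_add_length[of s a "Suc a"] l by simp
    then show ?thesis
      using path_edges_append[of s a 0 l] path_edges_Suc[of s "Suc a" l] l
      by (simp add: path_edges_Suc[of s a 0])
  qed
  then show ?thesis
    by (induction a) simp_all
qed (simp add: path_edges_def)

lemma cycle_edges_eq_path_edges:
  assumes "s \<noteq> []"
  shows "cycle_edges s = path_edges s a (length s)"
proof -
  obtain l where l: "length s = Suc l"
    using assms by (cases s) auto
  have "cycle_edges s = path_edges s 0 l \<union> {pos_edge s 0 l}"
    using cycle_edges_window[of s l s 0] l by (simp add: cyc_nth_def)
  also have "pos_edge s 0 l = pos_edge s l (Suc l)"
    using pos_edge_mod[of s l "Suc l"] l by (simp add: pos_edge_commute)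
  also have "path_edges s 0 l \<union> {pos_edge s l (Suc l)} = path_edges s 0 (length s)"
    using path_edges_Suc[of s 0 l] l by simp
  finally show ?thesis
    using path_edges_shift[of s a] by simp
qed

lemma cycle_edges_two_paths:
  assumes "length s = 2 * m" "0 < m"
  shows "cycle_edges s = path_edges s i (m - 1) \<union> {pos_edge s (i + m - 1) (i + m)}
    \<union> path_edges s (i + m) (m - 1) \<union> {pos_edge s (i + 2 * m - 1) (i + 2 * m)}"
proof -
  obtain l where m: "m = Suc l"
    using assms(2) not0_implies_Suc by blast
  have len: "length s = l + Suc (l + Suc 0)"
    using assms(1) m by simp
  then have "s \<noteq> []"
    by auto
  then have "cycle_edges s = path_edges s i (l + Suc (l + Suc 0))"
    using cycle_edges_eq_path_edges[of s i] len by simp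
  then show ?thesis
    unfolding path_edges_append path_edges_0 m by (simp add: add.assoc mult_2)
qed

lemma split_cycles_rotate:
  assumes "length s = 2 * m" "0 < m"
  shows "split_cycles m (rotate i s) = path_edges s i (m - 1) \<union> {pos_edge s i (i + m - 1)}
    \<union> path_edges s (i + m) (m - 1) \<union> {pos_edge s (i + m) (i + 2 * m - 1)}"
proof -
  obtain l where m: "m = Suc l"
    using assms(2) not0_implies_Suc by blast
  have "cycle_edges (take m (rotate i s)) = path_edges s i l \<union> {pos_edge s i (i + l)}"
    using assms m by (intro cycle_edges_window) (auto simp: nth_rotate cyc_nth_def add.commute)
  moreover have "cycle_edges (drop m (rotate i s))
      = path_edges s (i + m) l \<union> {pos_edge s (i + m) (i + m + l)}"
    using assms m by (intro cycle_edges_window) (auto simp: nth_rotate cyc_nth_def algebra_simps)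
  ultimately show ?thesis
    unfolding split_cycles_def m by (simp add: Un_assoc mult_2 add.assoc)
qed

text \<open>Cutting the cycle through s into the windows of length m starting at positions i and i + m
  removes the first two of these edges and adds the last two.\<close>

definition switched_edges :: "nat list \<Rightarrow> nat \<Rightarrow> nat \<Rightarrow> nat set set" where
  "switched_edges s m i = {pos_edge s (i + m - 1) (i + m), pos_edge s (i + 2 * m - 1) (i + 2 * m),
     pos_edge s i (i + m - 1), pos_edge s (i + m) (i + 2 * m - 1)}"

lemma split_rotate_agrees_off_switched:
  assumes "length s = 2 * m" "0 < m" "e \<notin> switched_edges s m i"
  shows "e \<in> split_cycles m (rotate i s) \<longleftrightarrow> e \<in> cycle_edges s"
  using assms(3)
  unfolding split_cycles_rotate[OF assms(1,2)] cycle_edges_two_paths[OF assms(1,2), of i]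
    switched_edges_def
  by blast

lemma pos_edge_eqD:
  assumes "distinct s" "s \<noteq> []" "pos_edge s a b = pos_edge s c d"
  shows "a mod length s = c mod length s \<and> b mod length s = d mod length s
    \<or> a mod length s = d mod length s \<and> b mod length s = c mod length s"
proof -
  have "cyc_nth s x = cyc_nth s y \<longleftrightarrow> x mod length s = y mod length s" for x y
    using assms(1,2) by (simp add: cyc_nth_def nth_eq_iff_index_eq)
  then show ?thesis
    using assms(3) unfolding pos_edge_def doubleton_eq_iff by simp
qed

lemma mod_eq_cases:
  fixes a b n :: nat
  assumes "a < 2 * n" "b < 2 * n" "a mod n = b mod n"
  shows "a = b \<or> a = b + n \<or> b = a + n"
proof -
  have "x mod n = (if x < n then x else x - n)" if "x < 2 * n" for x
    using that by (simp add: le_mod_geq)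
  then show ?thesis
    using assms by (auto split: if_splits)
qed

lemma switched_edges_unique:
  assumes "distinct s" "length s = 2 * m" "3 \<le> m" "i < m" "i' < m"
    and "e \<in> switched_edges s m i" "e \<in> switched_edges s m i'"
  shows "i = i'"
proof -
  \<comment> \<open>with m = k + 3 there are no truncated subtractions, and the final case split is linear\<close>
  obtain k where m: "m = k + 3"
    using assms(3) le_iff_add by (metis add.commute)
  obtain a b where ab: "e = pos_edge s a b"
    "a = i + k + 2 \<and> b = i + k + 3 \<or> a = i + 2 * k + 5 \<and> b = i + 2 * k + 6
     \<or> a = i \<and> b = i + k + 2 \<or> a = i + k + 3 \<and> b = i + 2 * k + 5"
    using assms(6) unfolding switched_edges_def m by auto
  obtain c d where cd: "e = pos_edge s c d"
    "c = i' + k + 2 \<and> d = i' + k + 3 \<or> c = i' + 2 * k + 5 \<and> d = i' + 2 * k + 6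
     \<or> c = i' \<and> d = i' + k + 2 \<or> c = i' + k + 3 \<and> d = i' + 2 * k + 5"
    using assms(7) unfolding switched_edges_def m by auto
  let ?N = "2 * k + 6"
  have len: "length s = ?N" "s \<noteq> []"
    using assms(2) m by auto
  have "a < 2 * ?N" "b < 2 * ?N" "c < 2 * ?N" "d < 2 * ?N"
    using ab(2) cd(2) assms(4,5) m by auto
  moreover have "a mod ?N = c mod ?N \<and> b mod ?N = d mod ?N \<or> a mod ?N = d mod ?N \<and> b mod ?N = c mod ?N"
    using pos_edge_eqD[OF assms(1) len(2), of a b c d] ab(1) cd(1) len(1) by simp
  ultimately have "(a = c \<or> a = c + ?N \<or> c = a + ?N) \<and> (b = d \<or> b = d + ?N \<or> d = b + ?N)
    \<or> (a = d \<or> a = d + ?N \<or> d = a + ?N) \<and> (b = c \<or> b = c + ?N \<or> c = b + ?N)"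
    using mod_eq_cases by blast
  then show ?thesis
    using ab(2) cd(2) assms(4,5) unfolding m by (elim disjE conjE) (simp_all only:)
qed

section \<open>Counting\<close>

lemma card_filter_add_card_filter_not:
  assumes "finite A"
  shows "card {x \<in> A. \<not> P x} + card {x \<in> A. P x} = card A"
proof -
  have "card ({x \<in> A. \<not> P x} \<union> {x \<in> A. P x}) = card {x \<in> A. \<not> P x} + card {x \<in> A. P x}"
    using assms by (intro card_Un_disjoint) auto
  moreover have "{x \<in> A. \<not> P x} \<union> {x \<in> A. P x} = A"
    by blast
  ultimately show ?thesis
    by simp
qed

lemma card_avoiding_ge:
  assumes "finite C"
    and unique: "\<And>e i i'. e \<in> C \<Longrightarrow> i < m \<Longrightarrow> i' < m
      \<Longrightarrow> e \<in> D i \<Longrightarrow> e \<in> D i' \<Longrightarrow> i = i'"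
  shows "m - card C \<le> card {i. i < m \<and> C \<inter> D i = {}}"
proof -
  let ?hit = "{i. i < m \<and> C \<inter> D i \<noteq> {}}"
  have "?hit \<subseteq> (\<lambda>e. THE i. i < m \<and> e \<in> D i) ` C"
  proof
    fix i assume "i \<in> ?hit"
    then obtain e where e: "i < m" "e \<in> C" "e \<in> D i"
      by blast
    then have "(THE i. i < m \<and> e \<in> D i) = i"
      using unique by blast
    then show "i \<in> (\<lambda>e. THE i. i < m \<and> e \<in> D i) ` C"
      using e(2) by force
  qed
  then have "card ?hit \<le> card C"
    using assms(1) by (meson card_image_le card_mono finite_imageI le_trans)
  then have "m - card C \<le> m - card ?hit"
    by (rule diff_le_mono2)
  also have "\<dots> = card ({..<m} - ?hit)"
    by (subst card_Diff_subset) (auto intro: finite_subset[of _ "{..<m}"])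
  also have "{..<m} - ?hit = {i. i < m \<and> C \<inter> D i = {}}"
    by auto
  finally show ?thesis .
qed

lemma card_rotations_agreeing_ge:
  assumes "distinct s" "length s = 2 * m" "3 \<le> m" "finite C"
  shows "m - card C
    \<le> card {i. i < m \<and> (\<forall>e\<in>C. e \<in> split_cycles m (rotate i s) \<longleftrightarrow> e \<in> cycle_edges s)}"
proof -
  have "m - card C \<le> card {i. i < m \<and> C \<inter> switched_edges s m i = {}}"
    using switched_edges_unique[OF assms(1-3)] by (intro card_avoiding_ge[OF assms(4)]) blast
  also have "\<dots> \<le> card {i. i < m \<and> (\<forall>e\<in>C. e \<in> split_cycles m (rotate i s) \<longleftrightarrow> e \<in> cycle_edges s)}"
    using split_rotate_agrees_off_switched[OF assms(2)] assms(3) by (intro card_mono) auto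
  finally show ?thesis .
qed

lemma double_counting_le:
  assumes "finite P" "A \<subseteq> P"
    and maps: "\<And>i. i < m \<Longrightarrow> g i ` P \<subseteq> P" "\<And>i. i < m \<Longrightarrow> inj_on (g i) P"
    and hits: "\<And>t. t \<in> A \<Longrightarrow> r \<le> card {i. i < m \<and> g i t \<in> T}"
  shows "card A * r \<le> m * card (P \<inter> T)"
proof -
  have "card A * r \<le> (\<Sum>t\<in>A. card {i. i < m \<and> g i t \<in> T})"
    using hits sum_mono[of A "\<lambda>_. r"] by simp
  also have "\<dots> \<le> (\<Sum>t\<in>P. card {i. i < m \<and> g i t \<in> T})"
    using assms(1,2) by (intro sum_mono2) auto
  also have "\<dots> = (\<Sum>t\<in>P. \<Sum>i<m. of_bool (g i t \<in> T))"
    by (simp add: Int_def)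
  also have "\<dots> = (\<Sum>i<m. \<Sum>t\<in>P. of_bool (g i t \<in> T))"
    by (rule sum.swap)
  also have "\<dots> = (\<Sum>i<m. card {t \<in> P. g i t \<in> T})"
    using assms(1) by (simp add: Int_def)
  also have "\<dots> \<le> (\<Sum>i<m. card (P \<inter> T))"
  proof (rule sum_mono)
    fix i assume "i \<in> {..<m}"
    then have "inj_on (g i) {t \<in> P. g i t \<in> T}" "g i ` {t \<in> P. g i t \<in> T} \<subseteq> P \<inter> T"
      using maps by (auto intro: inj_on_subset[OF maps(2)])
    then show "card {t \<in> P. g i t \<in> T} \<le> card (P \<inter> T)"
      using assms(1) by (intro card_inj_on_le) auto
  qed
  finally show ?thesis
    by simp
qed

section \<open>The inputs and their certificates\<close>

lemma one_cycle_iff: "3 \<le> n \<Longrightarrow> one_cycle n E \<longleftrightarrow> E \<in> cycle_edges ` orderings n"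
  unfolding one_cycle_def orderings_def by auto

lemma two_cycles_iff:
  assumes "n = 2 * m" "3 \<le> m"
  shows "two_cycles n E \<longleftrightarrow> E \<in> split_cycles m ` orderings n"
proof
  assume "two_cycles n E"
  then obtain vs ws where h: "distinct (vs @ ws)" "set (vs @ ws) = {1..n}"
      "2 * length vs = n" "2 * length ws = n" "E = cycle_edges vs \<union> cycle_edges ws"
    unfolding two_cycles_def by blast
  then have "E = split_cycles m (vs @ ws)"
    using assms(1) by (simp add: split_cycles_def)
  moreover have "vs @ ws \<in> orderings n"
    using h assms(1) by (simp add: orderings_def)
  ultimately show "E \<in> split_cycles m ` orderings n"
    by blast
next
  assume "E \<in> split_cycles m ` orderings n"
  then obtain s where s: "s \<in> orderings n" "E = split_cycles m s"
    by blast
  have "distinct (take m s @ drop m s)" "set (take m s @ drop m s) = {1..n}"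
    "2 * length (take m s) = n" "2 * length (drop m s) = n"
    "3 \<le> length (take m s)" "3 \<le> length (drop m s)"
    using s(1) assms by (simp_all add: orderings_def)
  then show "two_cycles n E"
    unfolding two_cycles_def s(2) split_cycles_def by blast
qed

lemma cycle_edges_subset_set:
  assumes "e \<in> cycle_edges vs"
  shows "e \<subseteq> set vs"
proof -
  obtain i where i: "i < length vs" "e = {vs ! i, vs ! (Suc i mod length vs)}"
    using assms unfolding cycle_edges_conv_image by blast
  then have "Suc i mod length vs < length vs"
    by (intro mod_less_divisor) auto
  then show ?thesis
    using i by simp
qed

lemma cycle_leaves_set:
  assumes "x \<in> set s" "x \<in> V" "y \<in> set s" "y \<notin> V"
  shows "\<exists>p < length s. s ! p \<in> V \<and> s ! (Suc p mod length s) \<notin> V"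
proof (rule ccontr)
  assume no_exit: "\<not> ?thesis"
  have step: "cyc_nth s (Suc p) \<in> V" if "cyc_nth s p \<in> V" for p
  proof -
    have "p mod length s < length s"
      using length_pos_if_in_set[OF assms(1)] by simp
    then have "s ! (Suc (p mod length s) mod length s) \<in> V"
      using no_exit that by (auto simp: cyc_nth_def)
    then show ?thesis
      by (simp add: cyc_nth_def mod_Suc_eq)
  qed
  obtain p0 q where p0: "p0 < length s" "s ! p0 = x" and q: "q < length s" "s ! q = y"
    using assms(1,3) by (metis in_set_conv_nth)
  have "cyc_nth s (p0 + t) \<in> V" for t
  proof (induction t)
    case 0
    then show ?case
      using assms(2) p0 by (simp add: cyc_nth_def)
  next
    case (Suc t)
    then show ?case
      using step by simp
  qed
  from this[of "q + length s - p0"] have "y \<in> V"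
    using p0 q by (simp add: cyc_nth_def)
  then show False
    using assms(4) by contradiction
qed

lemma cycle_edges_ne_split_cycles:
  assumes "s \<in> orderings n" "t \<in> orderings n" "n = 2 * m" "0 < m"
  shows "cycle_edges s \<noteq> split_cycles m t"
proof
  assume eq: "cycle_edges s = split_cycles m t"
  let ?V = "set (take m t)"
  have t: "distinct t" "length t = n" "set s = set t"
    using assms(1,2) by (auto simp: orderings_def)
  have disj: "?V \<inter> set (drop m t) = {}"
    using t(1) by (simp add: set_take_disj_set_drop_if_distinct)
  have x: "t ! 0 \<in> ?V"
    using nth_mem[of 0 "take m t"] t(2) assms(3,4) by simp
  have y: "t ! m \<in> set (drop m t)"
    using nth_mem[of 0 "drop m t"] t(2) assms(3,4) by simp
  have "t ! 0 \<in> set s"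
    using x t(3) set_take_subset[of m t] by blast
  moreover have "t ! m \<in> set s"
    using y t(3) set_drop_subset[of m t] by blast
  moreover have "t ! m \<notin> ?V"
    using y disj by blast
  ultimately obtain p where p: "p < length s" "s ! p \<in> ?V" "s ! (Suc p mod length s) \<notin> ?V"
    using cycle_leaves_set[of "t ! 0" s ?V "t ! m"] x by blast
  have "{s ! p, s ! (Suc p mod length s)} \<in> cycle_edges s"
    using p(1) unfolding cycle_edges_conv_image by blast
  then have "{s ! p, s ! (Suc p mod length s)} \<subseteq> ?V
      \<or> {s ! p, s ! (Suc p mod length s)} \<subseteq> set (drop m t)"
    using eq cycle_edges_subset_set unfolding split_cycles_def by blast
  then show False
    using p(2,3) disj by blast
qed

lemma cycle_edges_in_Delta:
  assumes "3 \<le> n" "t \<in> orderings n"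
  shows "cycle_edges t \<in> Delta n"
  using one_cycle_iff[OF assms(1)] assms(2) unfolding Delta_def by blast

lemma split_cycles_in_Delta:
  assumes "n = 2 * m" "3 \<le> m" "t \<in> orderings n"
  shows "split_cycles m t \<in> Delta n"
  using two_cycles_iff[OF assms(1,2)] assms(3) unfolding Delta_def by blast

lemma Delta_one_cycle:
  assumes "3 \<le> n"
  shows "{x \<in> Delta n. one_cycle n x} = cycle_edges ` orderings n"
  unfolding Delta_def one_cycle_iff[OF assms] by blast

lemma Delta_not_one_cycle:
  assumes "n = 2 * m" "3 \<le> m"
  shows "{x \<in> Delta n. \<not> one_cycle n x} = split_cycles m ` orderings n"
proof -
  have "3 \<le> n"
    using assms by simp
  moreover have "E \<notin> cycle_edges ` orderings n" if "E \<in> split_cycles m ` orderings n" for E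
    using that cycle_edges_ne_split_cycles[OF _ _ assms(1)] assms(2) by fastforce
  ultimately show ?thesis
    unfolding Delta_def one_cycle_iff[OF \<open>3 \<le> n\<close>] two_cycles_iff[OF assms] by blast
qed

lemma cycle_edges_subset_Pairs:
  assumes "distinct vs" "set vs \<subseteq> {1..n}" "2 \<le> length vs"
  shows "cycle_edges vs \<subseteq> Pairs n"
proof
  fix e assume "e \<in> cycle_edges vs"
  then obtain j where j: "j < length vs" "e = {vs ! j, vs ! (Suc j mod length vs)}"
    unfolding cycle_edges_conv_image by blast
  have j': "Suc j mod length vs < length vs" "Suc j mod length vs \<noteq> j"
    using j(1) assms(3) by (auto simp: mod_Suc)
  then have "vs ! j \<noteq> vs ! (Suc j mod length vs)"
    using assms(1) j(1) by (simp add: nth_eq_iff_index_eq)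
  moreover have "vs ! j \<in> {1..n}" "vs ! (Suc j mod length vs) \<in> {1..n}"
    using assms(2) j(1) j'(1) nth_mem by blast+
  ultimately show "e \<in> Pairs n"
    unfolding Pairs_def using j(2) by blast
qed

lemma finite_Pairs: "finite (Pairs n)"
proof -
  have "Pairs n \<subseteq> (\<lambda>(i, j). {i, j}) ` ({1..n} \<times> {1..n})"
    unfolding Pairs_def by auto
  then show ?thesis
    by (rule finite_subset) simp
qed

lemma Delta_subset_Pow_Pairs: "Delta n \<subseteq> Pow (Pairs n)"
proof
  fix x assume "x \<in> Delta n"
  then consider vs where "distinct vs" "set vs = {1..n}" "3 \<le> length vs" "x = cycle_edges vs"
    | vs ws where "distinct (vs @ ws)" "set (vs @ ws) = {1..n}" "3 \<le> length vs" "3 \<le> length ws"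
        "x = cycle_edges vs \<union> cycle_edges ws"
    unfolding Delta_def one_cycle_def two_cycles_def by blast
  then show "x \<in> Pow (Pairs n)"
  proof cases
    case 1
    then show ?thesis
      using cycle_edges_subset_Pairs[of vs n] by simp
  next
    case 2
    then show ?thesis
      using cycle_edges_subset_Pairs[of vs n] cycle_edges_subset_Pairs[of ws n] by auto
  qed
qed

lemma finite_Delta: "finite (Delta n)"
  by (rule finite_subset[OF Delta_subset_Pow_Pairs]) (simp add: finite_Pairs)

lemma ex_certificate_card_le:
  assumes "x \<in> Delta n"
  obtains C where "is_certificate n f x C" "card C \<le> cert_complexity n f"
proof -
  let ?Cs = "{C. is_certificate n f x C}"
  have "y = x" if "y \<in> Delta n" "\<forall>e \<in> Pairs n. e \<in> y \<longleftrightarrow> e \<in> x" for y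
    using that assms Delta_subset_Pow_Pairs by blast
  then have "Pairs n \<in> ?Cs"
    unfolding is_certificate_def by auto
  moreover have "?Cs \<subseteq> Pow (Pairs n)"
    unfolding is_certificate_def by auto
  then have "finite (card ` ?Cs)"
    using finite_Pairs by (meson finite_Pow_iff finite_imageI finite_subset)
  ultimately obtain C where C: "C \<in> ?Cs" "card C = Min (card ` ?Cs)"
    using Min_in[of "card ` ?Cs"] by fastforce
  moreover have "Min (card ` ?Cs) \<le> cert_complexity n f"
    unfolding cert_complexity_def using finite_Delta assms by (intro Max_ge) auto
  ultimately show ?thesis
    using that by simp
qed

section \<open>The error bound\<close>

lemma card_accepted_rotations_ge:
  assumes "n = 2 * m" "3 \<le> m" "t \<in> orderings n" "f (cycle_edges t)"
  shows "m - cert_complexity n f \<le> card {i. i < m \<and> f (split_cycles m (rotate i t))}"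
proof -
  have "cycle_edges t \<in> Delta n"
    using assms by (intro cycle_edges_in_Delta) simp_all
  then obtain C where C: "is_certificate n f (cycle_edges t) C" "card C \<le> cert_complexity n f"
    by (rule ex_certificate_card_le)
  have "finite C"
    using C(1) finite_subset[OF _ finite_Pairs] unfolding is_certificate_def by blast
  have "m - cert_complexity n f \<le> m - card C"
    using C(2) by (rule diff_le_mono2)
  also have "\<dots> \<le> card {i. i < m \<and> (\<forall>e\<in>C. e \<in> split_cycles m (rotate i t) \<longleftrightarrow> e \<in> cycle_edges t)}"
    using assms \<open>finite C\<close> by (intro card_rotations_agreeing_ge) (simp_all add: orderings_def)
  also have "\<dots> \<le> card {i. i < m \<and> f (split_cycles m (rotate i t))}"
  proof (rule card_mono)
    show "{i. i < m \<and> (\<forall>e\<in>C. e \<in> split_cycles m (rotate i t) \<longleftrightarrow> e \<in> cycle_edges t)}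
        \<subseteq> {i. i < m \<and> f (split_cycles m (rotate i t))}"
    proof clarify
      fix i assume i: "i < m" "\<forall>e\<in>C. e \<in> split_cycles m (rotate i t) \<longleftrightarrow> e \<in> cycle_edges t"
      have "split_cycles m (rotate i t) \<in> Delta n"
        using split_cycles_in_Delta[OF assms(1,2)] rotate_in_orderings assms(3) by blast
      then have "f (split_cycles m (rotate i t)) = f (cycle_edges t)"
        using C(1) i(2) unfolding is_certificate_def by blast
      then show "f (split_cycles m (rotate i t))"
        using assms(4) by simp
    qed
  qed simp
  finally show ?thesis .
qed

lemma card_accepted_cycles_le:
  assumes "n = 2 * m" "3 \<le> m"
  shows "card {t \<in> orderings n. f (cycle_edges t)} * (m - cert_complexity n f)
    \<le> m * card {t \<in> orderings n. f (split_cycles m t)}"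
proof -
  have "card {t \<in> orderings n. f (cycle_edges t)} * (m - cert_complexity n f)
      \<le> m * card (orderings n \<inter> {t. f (split_cycles m t)})"
    using card_accepted_rotations_ge[OF assms]
    by (intro double_counting_le[where g = rotate])
      (simp_all add: finite_orderings rotate_in_orderings inj_on_rotate_orderings image_subsetI)
  also have "orderings n \<inter> {t. f (split_cycles m t)} = {t \<in> orderings n. f (split_cycles m t)}"
    by blast
  finally show ?thesis .
qed

lemma canon_err_one_cycle_eq:
  assumes "n = 2 * m" "3 \<le> m"
  shows "canon_err n (one_cycle n) f
    = (real (card {t \<in> orderings n. \<not> f (cycle_edges t)})
       + real (card {t \<in> orderings n. f (split_cycles m t)})) / (2 * real (card (orderings n)))"
proof -
  let ?P = "orderings n"
  have "3 \<le> n"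
    using assms by simp
  have "{x \<in> Delta n. one_cycle n x \<and> f x \<noteq> one_cycle n x} = {E \<in> cycle_edges ` ?P. \<not> f E}"
    "{x \<in> Delta n. \<not> one_cycle n x \<and> f x \<noteq> one_cycle n x} = {E \<in> split_cycles m ` ?P. f E}"
    using Delta_one_cycle[OF \<open>3 \<le> n\<close>] Delta_not_one_cycle[OF assms] by blast+
  then have "canon_err n (one_cycle n) f
      = 1/2 * (real (card {E \<in> cycle_edges ` ?P. \<not> f E}) / real (card (cycle_edges ` ?P)))
      + 1/2 * (real (card {E \<in> split_cycles m ` ?P. f E}) / real (card (split_cycles m ` ?P)))"
    unfolding canon_err_def Delta_one_cycle[OF \<open>3 \<le> n\<close>] Delta_not_one_cycle[OF assms] by simp
  also have "\<dots> = 1/2 * (real (card {t \<in> ?P. \<not> f (cycle_edges t)}) / real (card ?P))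
      + 1/2 * (real (card {t \<in> ?P. f (split_cycles m t)}) / real (card ?P))"
    by (simp only: uniform_image_fraction[OF cycle_edges_map]
        uniform_image_fraction[OF split_cycles_map])
  finally show ?thesis
    using card_orderings_pos[of n] by (simp add: field_simps)
qed

lemma canon_err_one_cycle_ge:
  assumes "n = 2 * m" "3 \<le> m"
  shows "1/2 - real (cert_complexity n f) / real n \<le> canon_err n (one_cycle n) f"
proof -
  define k where "k = cert_complexity n f"
  let ?P = "orderings n"
  let ?A = "{t \<in> ?P. f (cycle_edges t)}"
  let ?R = "{t \<in> ?P. \<not> f (cycle_edges t)}"
  let ?T = "{t \<in> ?P. f (split_cycles m t)}"
  note err = canon_err_one_cycle_eq[OF assms, of f]
  show ?thesis
  proof (cases "k \<le> m")
    case True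
    have "card ?R + card ?A = card ?P"
      by (rule card_filter_add_card_filter_not[OF finite_orderings])
    then have "(m - k) * card ?P = (m - k) * card ?R + card ?A * (m - k)"
      by (simp add: algebra_simps flip: \<open>card ?R + card ?A = card ?P\<close>)
    also have "\<dots> \<le> m * card ?R + m * card ?T"
      using card_accepted_cycles_le[OF assms, of f] unfolding k_def[symmetric]
      by (intro add_mono) simp_all
    finally have "real ((m - k) * card ?P) \<le> real (m * (card ?R + card ?T))"
      by (simp only: of_nat_le_iff algebra_simps)
    then have main: "(real m - real k) * real (card ?P) \<le> real m * (real (card ?R) + real (card ?T))"
      using True by (simp add: of_nat_diff)
    have "1/2 - real k / real n = (real m - real k) / (2 * real m)"
      using assms by (simp add: field_simps)
    also have "\<dots> \<le> (real (card ?R) + real (card ?T)) / (2 * real (card ?P))"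
      using main card_orderings_pos[of n] assms(2)
      by (subst frac_le_eq) (auto intro!: divide_nonpos_pos simp: algebra_simps)
    finally show ?thesis
      unfolding err k_def .
  next
    case False
    then have "1/2 - real k / real n \<le> 0"
      using assms by (simp add: field_simps)
    also have "0 \<le> canon_err n (one_cycle n) f"
      unfolding err by simp
    finally show ?thesis
      unfolding k_def .
  qed
qed

lemma approx_cert_complexity_attained:
  assumes "0 \<le> \<delta>"
  obtains f where "approx_cert_complexity n \<delta> g = cert_complexity n f" "canon_err n g f \<le> \<delta>"
proof -
  let ?S = "{cert_complexity n f | f. canon_err n g f \<le> \<delta>}"
  have "canon_err n g g = 0"
    unfolding canon_err_def by simp
  then have "cert_complexity n g \<in> ?S"
    using assms by force
  then have "Inf ?S \<in> ?S"
    by (intro Inf_nat_def1) blast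
  then show ?thesis
    using that unfolding approx_cert_complexity_def by blast
qed

theorem corollary5p12:
  fixes n :: nat
  assumes "even n" and "6 \<le> n"
  shows "real (approx_cert_complexity n (1/6) (oneVtwoCycle n)) \<ge> real n / 4"
proof -
  define m where "m = n div 2"
  have nm: "n = 2 * m" and m: "3 \<le> m"
    using assms by (auto simp: m_def)
  have g: "oneVtwoCycle n = one_cycle n"
    by (rule ext) (simp add: oneVtwoCycle_def)
  obtain f where f: "approx_cert_complexity n (1/6) (oneVtwoCycle n) = cert_complexity n f"
      "canon_err n (one_cycle n) f \<le> 1/6"
    using approx_cert_complexity_attained[of "1/6" n "oneVtwoCycle n"] g by auto
  have "1/2 - real (cert_complexity n f) / real n \<le> 1/6"
    using canon_err_one_cycle_ge[OF nm m, of f] f(2) by linarith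
  then show ?thesis
    using f(1) nm m by (simp add: field_simps)
qed

end
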